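(* For every integer $n\ge 1$, $\mathbf{w}(\omega^{\times n})=\omega^{n-1}$.
   Context: $\omega^{\times n}=\omega\times\dots\times\omega$ ($n$ factors) is the cartesian product of $n$ copies of the ordinal $\omega$ with the componentwise order. The width $\mathbf{w}(A)$ of a wqo $A$ is the rank of the forest of nonempty finite sequences of pairwise incomparable elements of $A$ ordered by initial segment, i.e. $\mathbf{w}(A)=\sup_s(r(s)+1)$ with $r(s)=\sup\{r(t)+1: t$ child of $s\}$. *)

theory Defs
  imports Main
begin

text \<open>Ordinals are represented by (reflexive) well-order relations in the sense of
Main's BNF_Wellorder_Relation (Well_order), up to isomorphism.\<close>

definition omega_prod_carrier :: "nat \<Rightarrow> nat list set" where
  "omega_prod_carrier n = {xs. length xs = n}"

definition omega_prod_le :: "nat list \<Rightarrow> nat list \<Rightarrow> bool" where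
  "omega_prod_le xs ys = list_all2 (\<le>) xs ys"

definition incomparable :: "('a \<Rightarrow> 'a \<Rightarrow> bool) \<Rightarrow> 'a \<Rightarrow> 'a \<Rightarrow> bool" where
  "incomparable le x y \<longleftrightarrow> \<not> le x y \<and> \<not> le y x"

text \<open>Nodes of the forest: nonempty finite sequences of pairwise incomparable elements.
The children of s are the one-element extensions s @ [a].\<close>
definition antichain_seqs :: "'a set \<Rightarrow> ('a \<Rightarrow> 'a \<Rightarrow> bool) \<Rightarrow> 'a list set" where
  "antichain_seqs A le = {s. s \<noteq> [] \<and> set s \<subseteq> A \<and>
      (\<forall>i j. i < j \<and> j < length s \<longrightarrow> incomparable le (s ! i) (s ! j))}"

text \<open>is_width A le alpha: the well-order \<alpha> is (isomorphic to) the width of (A, le), i.e.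
there is a rank function r into \<alpha> with r(s) = sup{r(t)+1 : t child of s}
(the least element of \<alpha> strictly above all r(t)), and \<alpha> = sup_s (r(s)+1),
i.e. the field of \<alpha> is the union of the closed initial segments [0, r(s)].\<close>
definition is_width :: "'a set \<Rightarrow> ('a \<Rightarrow> 'a \<Rightarrow> bool) \<Rightarrow> 'b rel \<Rightarrow> bool" where
  "is_width A le \<alpha> \<longleftrightarrow> Well_order \<alpha> \<and>
    (\<exists>r. (\<forall>s\<in>antichain_seqs A le.
            r s \<in> Field \<alpha>
          \<and> (\<forall>a. s @ [a] \<in> antichain_seqs A le \<longrightarrow>
                 (r (s @ [a]), r s) \<in> \<alpha> \<and> r (s @ [a]) \<noteq> r s)
          \<and> (\<forall>\<beta>\<in>Field \<alpha>. (\<forall>a. s @ [a] \<in> antichain_seqs A le \<longrightarrow>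
                 (r (s @ [a]), \<beta>) \<in> \<alpha> \<and> r (s @ [a]) \<noteq> \<beta>) \<longrightarrow> (r s, \<beta>) \<in> \<alpha>))
      \<and> Field \<alpha> = {\<beta>. \<exists>s\<in>antichain_seqs A le. (\<beta>, r s) \<in> \<alpha>})"

definition omega_pow :: "nat \<Rightarrow> nat list rel" where
  "omega_pow k = {(xs, ys). length xs = k \<and> length ys = k \<and>
      (xs = ys \<or> (xs, ys) \<in> lexord {(a, b). a < b})}"

end

theory Submission
  imports Defs
begin

text \<open>Let \<open>A = \<omega>\<times>\<dots>\<times>\<omega>\<close> with m+1 factors. Every antichain sequence s in A has
  rank at most an ordinal \<open>B(s) < \<omega>^(m+1)\<close> that strictly decreases when s is extended:
  \<open>B([]) = \<omega>^m\<close>, and for \<open>s = a # s'\<close> every element of s' lies strictly below a in some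
  coordinate, so grouping the elements of s' by the first such coordinate and their value
  there splits s' into finitely many antichains in dimension m; \<open>B(s)\<close> is the natural sum
  of their bounds. As \<open>B(s) < \<omega>^m\<close> for nonempty s, all ranks are below \<open>\<omega>^m\<close>.
  Conversely, if \<open>\<gamma>\<^sub>0 > \<gamma>\<^sub>1 > \<dots>\<close> in \<open>\<omega>^m\<close>, the vectors \<open>k # \<gamma>\<^sub>k\<close> form an antichain in A,
  so the one-element sequence \<open>[0 # \<beta>]\<close> has rank at least \<open>\<beta>\<close>.\<close>

definition children :: "'a list set \<Rightarrow> 'a list \<Rightarrow> 'a list set" where
  "children N s = {t \<in> N. \<exists>a. t = s @ [a]}"

definition is_rank :: "'b rel \<Rightarrow> 'a list set \<Rightarrow> ('a list \<Rightarrow> 'b) \<Rightarrow> bool" where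
  "is_rank \<alpha> N \<rho> \<longleftrightarrow> (\<forall>s\<in>N. \<rho> s \<in> AboveS \<alpha> (\<rho> ` children N s) \<and>
      (\<forall>\<beta>\<in>AboveS \<alpha> (\<rho> ` children N s). (\<rho> s, \<beta>) \<in> \<alpha>))"

lemma AboveS_children_iff:
  "\<beta> \<in> AboveS \<alpha> (\<rho> ` children N s) \<longleftrightarrow>
     \<beta> \<in> Field \<alpha> \<and> (\<forall>a. s @ [a] \<in> N \<longrightarrow> (\<rho> (s @ [a]), \<beta>) \<in> \<alpha> \<and> \<rho> (s @ [a]) \<noteq> \<beta>)"
  unfolding AboveS_def children_def by auto

lemma is_width_iff_rank:
  "is_width A le \<alpha> \<longleftrightarrow> Well_order \<alpha> \<and> (\<exists>\<rho>. is_rank \<alpha> (antichain_seqs A le) \<rho> \<and>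
     Field \<alpha> = {\<beta>. \<exists>s\<in>antichain_seqs A le. (\<beta>, \<rho> s) \<in> \<alpha>})"
  unfolding is_width_def is_rank_def Ball_def AboveS_children_iff imp_conjL conj_assoc ..

lemma rank_in_Field: "is_rank \<alpha> N \<rho> \<Longrightarrow> s \<in> N \<Longrightarrow> \<rho> s \<in> Field \<alpha>"
  unfolding is_rank_def AboveS_def by blast

lemma rank_child_less:
  assumes "is_rank \<alpha> N \<rho>" "s \<in> N" "t \<in> children N s"
  shows "\<rho> t \<in> underS \<alpha> (\<rho> s)"
proof -
  have "\<rho> s \<in> AboveS \<alpha> (\<rho> ` children N s)" using assms(1,2) unfolding is_rank_def by blast
  then show ?thesis using assms(3) unfolding AboveS_def underS_def by auto
qed

lemma rank_exists:
  assumes wo: "Well_order \<alpha>"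
    and f_in: "\<And>s. s \<in> N \<Longrightarrow> f s \<in> Field \<alpha>"
    and f_dec: "\<And>s t. s \<in> N \<Longrightarrow> t \<in> children N s \<Longrightarrow> f t \<in> underS \<alpha> (f s)"
  shows "\<exists>\<rho>. is_rank \<alpha> N \<rho>"
proof -
  interpret wo_rel \<alpha> using wo by (rule wo_rel.intro)
  define R where "R = inv_image (\<alpha> - Id) f"
  define \<rho> where "\<rho> = wfrec R (\<lambda>g s. suc (g ` children N s))"
  have wf_R: "wf R" unfolding R_def using WF by (rule wf_inv_image)
  have \<rho>_eq: "\<rho> s = suc (\<rho> ` children N s)" if "s \<in> N" for s
  proof -
    have "cut \<rho> R s ` children N s = \<rho> ` children N s"
      using f_dec[OF that] by (force simp: cut_apply R_def underS_def)
    then show ?thesis unfolding \<rho>_def by (subst wfrec[OF wf_R]) simp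
  qed
  have "s \<in> N \<longrightarrow> \<rho> s \<in> AboveS (\<rho> ` children N s) \<and>
      (\<forall>\<beta>\<in>AboveS (\<rho> ` children N s). (\<rho> s, \<beta>) \<in> \<alpha>) \<and> (\<rho> s, f s) \<in> \<alpha>" for s
  proof (induction s rule: wf_induct_rule[OF wf_R])
    case (1 s)
    show ?case
    proof
      assume s: "s \<in> N"
      have child_below: "\<rho> t \<in> underS (f s)" if t: "t \<in> children N s" for t
      proof -
        have "t \<in> N" "(t, s) \<in> R"
          using t f_dec[OF s t] unfolding children_def R_def underS_def by auto
        then have \<rho>f: "(\<rho> t, f t) \<in> \<alpha>" using "1.IH" by blast
        have ft: "(f t, f s) \<in> \<alpha>" "f t \<noteq> f s"
          using f_dec[OF s t] unfolding underS_def by auto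
        have "(\<rho> t, f s) \<in> \<alpha>" using TRANS \<rho>f ft(1) by (rule transD)
        moreover have "\<rho> t \<noteq> f s"
          using ANTISYM \<rho>f ft by (auto dest: antisymD)
        ultimately show ?thesis unfolding underS_def by blast
      qed
      have f_above: "f s \<in> AboveS (\<rho> ` children N s)"
        using child_below f_in[OF s] unfolding AboveS_def underS_def by fastforce
      have "\<rho> ` children N s \<subseteq> Field \<alpha>"
        using child_below unfolding underS_def by (auto intro: FieldI1)
      then have "suc (\<rho> ` children N s) \<in> AboveS (\<rho> ` children N s)"
        using f_above by (intro suc_AboveS) auto
      then show "\<rho> s \<in> AboveS (\<rho> ` children N s) \<and>
          (\<forall>\<beta>\<in>AboveS (\<rho> ` children N s). (\<rho> s, \<beta>) \<in> \<alpha>) \<and> (\<rho> s, f s) \<in> \<alpha>"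
        unfolding \<rho>_eq[OF s] using suc_least_AboveS f_above by blast
    qed
  qed
  then show ?thesis unfolding is_rank_def by blast
qed

lemma rank_lower_bound:
  assumes wo: "Well_order \<alpha>" and \<rho>: "is_rank \<alpha> N \<rho>" and "S \<subseteq> N"
    and L_in: "\<And>s. s \<in> S \<Longrightarrow> L s \<in> Field \<alpha>"
    and L_ext: "\<And>s \<beta>. s \<in> S \<Longrightarrow> \<beta> \<in> underS \<alpha> (L s) \<Longrightarrow> \<exists>t\<in>children S s. (\<beta>, L t) \<in> \<alpha>"
  shows "s \<in> S \<Longrightarrow> (L s, \<rho> s) \<in> \<alpha>"
proof (induction s rule: wf_induct_rule[OF wf_inv_image[OF wo_rel.WF[OF wo_rel.intro[OF wo]], of \<rho>]])
  case (1 s)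
  interpret wo_rel \<alpha> using wo by (rule wo_rel.intro)
  have s: "s \<in> N" using \<open>s \<in> S\<close> \<open>S \<subseteq> N\<close> by blast
  show ?case
  proof (rule ccontr)
    assume "(L s, \<rho> s) \<notin> \<alpha>"
    moreover have "(\<rho> s, L s) \<in> \<alpha> \<or> (L s, \<rho> s) \<in> \<alpha>"
      using TOTALS rank_in_Field[OF \<rho> s] L_in[OF \<open>s \<in> S\<close>] by blast
    moreover have "(L s, L s) \<in> \<alpha>"
      using REFL L_in[OF \<open>s \<in> S\<close>] unfolding refl_on_def by blast
    ultimately have "\<rho> s \<in> underS (L s)" unfolding underS_def by auto
    then obtain t where t: "t \<in> children S s" and below_L: "(\<rho> s, L t) \<in> \<alpha>"
      using L_ext \<open>s \<in> S\<close> by blast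
    have child: "\<rho> t \<in> underS (\<rho> s)"
      using rank_child_less[OF \<rho> s] t \<open>S \<subseteq> N\<close> unfolding children_def by blast
    then have "(L t, \<rho> t) \<in> \<alpha>"
      using "1.IH" t unfolding children_def underS_def by auto
    then have "(\<rho> s, \<rho> t) \<in> \<alpha>" using TRANS below_L by (blast dest: transD)
    with child show False using ANTISYM unfolding underS_def by (blast dest: antisymD)
  qed
qed

abbreviation lex_less :: "nat list \<Rightarrow> nat list \<Rightarrow> bool" (infix "\<prec>" 50) where
  "xs \<prec> ys \<equiv> (xs, ys) \<in> lexord {(a, b). a < b}"

lemma trans_less_nat_rel: "trans {(a::nat, b). a < b}"
  by (auto simp: trans_def)

lemma lex_less_irrefl: "\<not> xs \<prec> xs"
  by (simp add: lexord_irreflexive)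

lemma Field_omega_pow: "Field (omega_pow k) = {xs. length xs = k}"
  unfolding omega_pow_def Field_def by auto

lemma underS_omega_pow_iff:
  "xs \<in> underS (omega_pow k) ys \<longleftrightarrow> length xs = k \<and> length ys = k \<and> xs \<prec> ys"
  unfolding omega_pow_def underS_def using lex_less_irrefl by auto

lemma Well_order_omega_pow: "Well_order (omega_pow k)"
proof -
  let ?r = "{(a::nat, b). a < b}"
  have "trans (omega_pow k)"
    unfolding omega_pow_def trans_def using lexord_trans[OF _ _ trans_less_nat_rel] by blast
  moreover have "antisym (omega_pow k)"
  proof -
    have "asym (lexord ?r)" by (rule lexord_asym) (auto intro: asymI)
    then show ?thesis unfolding omega_pow_def antisym_def by (auto dest: asymD)
  qed
  moreover have "refl_on (Field (omega_pow k)) (omega_pow k)"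
    unfolding Field_omega_pow refl_on_def by (auto simp: omega_pow_def)
  moreover have "total_on (Field (omega_pow k)) (omega_pow k)"
  proof (rule total_onI)
    fix xs ys assume "xs \<in> Field (omega_pow k)" "ys \<in> Field (omega_pow k)" "xs \<noteq> ys"
    moreover have "xs \<prec> ys \<or> ys \<prec> xs"
      using lexord_linear[of ?r xs ys] \<open>xs \<noteq> ys\<close> by (auto simp: less_linear)
    ultimately show "(xs, ys) \<in> omega_pow k \<or> (ys, xs) \<in> omega_pow k"
      unfolding Field_omega_pow by (auto simp: omega_pow_def)
  qed
  moreover have "wf (omega_pow k - Id)"
  proof (rule wf_subset)
    show "omega_pow k - Id \<subseteq> lex ?r" unfolding omega_pow_def by (auto simp: lexord_lex)
  qed (use wf_lex wf_less in blast)
  ultimately show ?thesis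
    unfolding well_order_on_def linear_order_on_def partial_order_on_def preorder_on_def
    by (auto simp: Field_def)
qed

definition antichains :: "nat \<Rightarrow> nat list list set" where
  "antichains k = {s. (\<forall>x\<in>set s. length x = k) \<and> sorted_wrt (incomparable omega_prod_le) s}"

lemma antichain_seqs_omega_prod:
  "antichain_seqs (omega_prod_carrier k) omega_prod_le = antichains k - {[]}"
  unfolding antichain_seqs_def antichains_def omega_prod_carrier_def sorted_wrt_iff_nth_less
  by auto

lemma omega_prod_le_total_1:
  "length x = 1 \<Longrightarrow> length y = 1 \<Longrightarrow> omega_prod_le x y \<or> omega_prod_le y x"
  unfolding omega_prod_le_def by (cases x; cases y) auto

lemma list_all2_le_imp_not_lex_less: "list_all2 (\<le>) u w \<Longrightarrow> \<not> w \<prec> u"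
proof (induction u arbitrary: w)
  case (Cons x u)
  then obtain y w' where "w = y # w'" "x \<le> y" "list_all2 (\<le>) u w'" by (cases w) auto
  with Cons.IH show ?case by auto
qed simp

definition first_coord_below :: "nat list \<Rightarrow> nat list \<Rightarrow> nat" where
  "first_coord_below a x = (LEAST i. i < length a \<and> x ! i < a ! i)"

lemma first_coord_below:
  assumes "length a = length x" "\<not> omega_prod_le a x"
  defines "i \<equiv> first_coord_below a x"
  shows "i < length a \<and> x ! i < a ! i"
proof -
  have "\<exists>i. i < length a \<and> x ! i < a ! i"
    using assms(1,2) unfolding omega_prod_le_def list_all2_conv_all_nth by (auto simp: not_le)
  then show ?thesis unfolding i_def first_coord_below_def by (rule LeastI_ex)
qed

definition del_coord :: "nat \<Rightarrow> nat list \<Rightarrow> nat list" where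
  "del_coord i x = take i x @ drop (Suc i) x"

lemma length_del_coord: "i < length x \<Longrightarrow> length (del_coord i x) = length x - 1"
  unfolding del_coord_def by simp

lemma omega_prod_le_del_coord_iff:
  assumes "length x = length y" "i < length x" "x ! i = y ! i"
  shows "omega_prod_le (del_coord i x) (del_coord i y) \<longleftrightarrow> omega_prod_le x y"
proof -
  have "omega_prod_le x y \<longleftrightarrow>
      list_all2 (\<le>) (take i x @ x ! i # drop (Suc i) x) (take i y @ y ! i # drop (Suc i) y)"
    unfolding omega_prod_le_def using assms id_take_nth_drop[of i x] id_take_nth_drop[of i y] by simp
  also have "\<dots> \<longleftrightarrow> omega_prod_le (del_coord i x) (del_coord i y)"
    unfolding omega_prod_le_def del_coord_def using assms by (simp add: list_all2_append)
  finally show ?thesis by simp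
qed

definition cells :: "nat list \<Rightarrow> (nat \<times> nat) set" where
  "cells a = Sigma {..<length a} (\<lambda>i. {..<a ! i})"

lemma finite_cells: "finite (cells a)"
  unfolding cells_def by auto

definition slice :: "nat list \<Rightarrow> nat \<times> nat \<Rightarrow> nat list list \<Rightarrow> nat list list" where
  "slice a q s = map (del_coord (fst q))
     (filter (\<lambda>x. first_coord_below a x = fst q \<and> x ! fst q = snd q) s)"

lemma slice_snoc:
  "slice a q (s @ [y]) = (if q = (first_coord_below a y, y ! first_coord_below a y)
     then slice a q s @ [del_coord (fst q) y] else slice a q s)"
  unfolding slice_def by (cases q) auto

lemma slice_antichains:
  assumes "s \<in> antichains (Suc k)" "q \<in> cells a" "length a = Suc k"
  shows "slice a q s \<in> antichains k"
proof -
  obtain i v where q: "q = (i, v)" "i < Suc k" using assms(2,3) unfolding cells_def by auto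
  let ?s = "filter (\<lambda>x. first_coord_below a x = i \<and> x ! i = v) s"
  have s': "?s \<in> antichains (Suc k)" using assms(1) unfolding antichains_def by (auto simp: sorted_wrt_filter)
  then have "sorted_wrt (incomparable omega_prod_le) ?s" unfolding antichains_def by auto
  then have "sorted_wrt (\<lambda>x y. incomparable omega_prod_le (del_coord i x) (del_coord i y)) ?s"
  proof (rule sorted_wrt_mono_rel[rotated])
    fix x y assume "x \<in> set ?s" "y \<in> set ?s" "incomparable omega_prod_le x y"
    with s' q show "incomparable omega_prod_le (del_coord i x) (del_coord i y)"
      unfolding incomparable_def antichains_def
      using omega_prod_le_del_coord_iff[of x y i] omega_prod_le_del_coord_iff[of y x i] by auto
  qed
  then show ?thesis using s' q unfolding antichains_def slice_def
    by (auto simp: sorted_wrt_map length_del_coord)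
qed

definition vsum :: "nat \<Rightarrow> 'q set \<Rightarrow> ('q \<Rightarrow> nat list) \<Rightarrow> nat list" where
  "vsum k P g = map (\<lambda>j. \<Sum>q\<in>P. g q ! j) [0..<k]"

lemma vsum_lex_less:
  assumes "finite P" "q\<^sub>0 \<in> P"
    and len: "\<And>q. length (g q) = k" "\<And>q. length (g' q) = k"
    and same: "\<And>q. q \<noteq> q\<^sub>0 \<Longrightarrow> g' q = g q"
    and less: "g' q\<^sub>0 \<prec> g q\<^sub>0"
  shows "vsum k P g' \<prec> vsum k P g"
proof -
  from less obtain p where p: "p < k" "take p (g' q\<^sub>0) = take p (g q\<^sub>0)" "g' q\<^sub>0 ! p < g q\<^sub>0 ! p"
    unfolding lexord_take_index_conv using len by auto
  have "g' q ! j = g q ! j" if "j < p" for q j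
  proof (cases "q = q\<^sub>0")
    case True
    have "take p (g' q\<^sub>0) ! j = take p (g q\<^sub>0) ! j" using p by simp
    then show ?thesis using True that by simp
  qed (simp add: same)
  then have "take p (vsum k P g') = take p (vsum k P g)"
    unfolding vsum_def using p(1) by (simp add: take_map)
  moreover have "(\<Sum>q\<in>P. g' q ! p) < (\<Sum>q\<in>P. g q ! p)"
  proof (rule sum_strict_mono_ex1[OF \<open>finite P\<close>])
    show "\<forall>q\<in>P. g' q ! p \<le> g q ! p" using same p(3) by (metis order.refl less_imp_le)
    show "\<exists>q\<in>P. g' q ! p < g q ! p" using \<open>q\<^sub>0 \<in> P\<close> p(3) by blast
  qed
  ultimately show ?thesis unfolding lexord_take_index_conv vsum_def using p(1) by auto
qed

text \<open>A coefficient list \<open>[c\<^sub>m, \<dots>, c\<^sub>0]\<close>, ordered by \<open>\<prec>\<close>, stands for the ordinal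
  \<open>\<omega>^m\<cdot>c\<^sub>m + \<dots> + c\<^sub>0\<close>; \<open>vsum\<close> is then the natural sum of ordinals.\<close>

fun antichain_bound :: "nat \<Rightarrow> nat list list \<Rightarrow> nat list" where
  "antichain_bound m [] = 1 # replicate m 0"
| "antichain_bound 0 (a # s) = [0]"
| "antichain_bound (Suc m) (a # s) =
     0 # vsum (Suc m) (cells a) (\<lambda>q. antichain_bound m (slice a q s))"

lemma length_antichain_bound: "length (antichain_bound m s) = Suc m"
  by (cases "(m, s)" rule: antichain_bound.cases) (auto simp: vsum_def)

lemma antichain_bound_nonempty: "s \<noteq> [] \<Longrightarrow> \<exists>u. antichain_bound m s = 0 # u"
  by (cases "(m, s)" rule: antichain_bound.cases) auto

lemma antichain_bound_snoc_less:
  "s @ [y] \<in> antichains (Suc m) \<Longrightarrow> antichain_bound m (s @ [y]) \<prec> antichain_bound m s"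
proof (induction m arbitrary: s y)
  case 0
  show ?case
  proof (cases s)
    case (Cons a s')
    then have "incomparable omega_prod_le a y" "length a = 1" "length y = 1"
      using "0.prems" unfolding antichains_def by auto
    then show ?thesis using omega_prod_le_total_1[of a y] unfolding incomparable_def by auto
  qed simp
next
  case (Suc m)
  show ?case
  proof (cases s)
    case (Cons a s')
    have "incomparable omega_prod_le a y" and len_a: "length a = Suc (Suc m)"
      and len_y: "length y = Suc (Suc m)" and s': "s' @ [y] \<in> antichains (Suc (Suc m))"
      using Suc.prems Cons unfolding antichains_def by auto
    define q\<^sub>0 where "q\<^sub>0 = (first_coord_below a y, y ! first_coord_below a y)"
    have "q\<^sub>0 \<in> cells a"
      using first_coord_below[of a y] \<open>incomparable omega_prod_le a y\<close> len_a len_y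
      unfolding q\<^sub>0_def cells_def incomparable_def by auto
    have "slice a q\<^sub>0 s' @ [del_coord (fst q\<^sub>0) y] \<in> antichains (Suc m)"
      using slice_antichains[OF s' \<open>q\<^sub>0 \<in> cells a\<close> len_a] slice_snoc[of a q\<^sub>0 s' y]
      unfolding q\<^sub>0_def by simp
    then have "antichain_bound m (slice a q\<^sub>0 (s' @ [y])) \<prec> antichain_bound m (slice a q\<^sub>0 s')"
      using Suc.IH slice_snoc[of a q\<^sub>0 s' y] unfolding q\<^sub>0_def by simp
    then have "vsum (Suc m) (cells a) (\<lambda>q. antichain_bound m (slice a q (s' @ [y])))
        \<prec> vsum (Suc m) (cells a) (\<lambda>q. antichain_bound m (slice a q s'))"
      by (intro vsum_lex_less[OF finite_cells \<open>q\<^sub>0 \<in> cells a\<close>])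
        (auto simp: length_antichain_bound slice_snoc q\<^sub>0_def)
    then show ?thesis using Cons by simp
  qed simp
qed

lemma antichain_bound_decreasing:
  fixes m :: nat
  defines "N \<equiv> antichain_seqs (omega_prod_carrier (Suc m)) omega_prod_le"
  assumes "s \<in> N" "t \<in> children N s"
  shows "tl (antichain_bound m t) \<in> underS (omega_pow m) (tl (antichain_bound m s))"
proof -
  obtain y where t: "t = s @ [y]" "t \<in> antichains (Suc m)" "s \<noteq> []"
    using assms unfolding children_def antichain_seqs_omega_prod by auto
  moreover obtain u v where "antichain_bound m t = 0 # u" "antichain_bound m s = 0 # v"
    using antichain_bound_nonempty t(1,3) by blast
  ultimately have "u \<prec> v" "length u = m" "length v = m"
    using antichain_bound_snoc_less[of s y m] length_antichain_bound[of m s] length_antichain_bound[of m t]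
    by auto
  then show ?thesis using \<open>antichain_bound m t = 0 # u\<close> \<open>antichain_bound m s = 0 # v\<close>
    by (simp add: underS_omega_pow_iff)
qed

lemma incomparable_Cons_Cons:
  "i < j \<Longrightarrow> v \<prec> u \<Longrightarrow> incomparable omega_prod_le (i # u) (j # v)"
  unfolding incomparable_def omega_prod_le_def by (auto dest: list_all2_le_imp_not_lex_less)

definition staircase :: "nat \<Rightarrow> nat list list set" where
  "staircase n = {s. s \<noteq> [] \<and> (\<forall>k<length s. length (s ! k) = n \<and> hd (s ! k) = k) \<and>
      sorted_wrt (\<lambda>x y. tl y \<prec> tl x) s}"

lemma staircase_antichains:
  assumes "s \<in> staircase (Suc m)"
  shows "s \<in> antichain_seqs (omega_prod_carrier (Suc m)) omega_prod_le"
proof -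
  have "incomparable omega_prod_le (s ! i) (s ! j)" if ij: "i < j" "j < length s" for i j
  proof -
    have "length (s ! i) = Suc m" "hd (s ! i) = i" "length (s ! j) = Suc m" "hd (s ! j) = j"
      using assms ij unfolding staircase_def by auto
    then obtain u v where "s ! i = i # u" "s ! j = j # v"
      by (metis length_Suc_conv list.sel(1))
    moreover have "tl (s ! j) \<prec> tl (s ! i)"
      using assms ij unfolding staircase_def sorted_wrt_iff_nth_less by auto
    ultimately show ?thesis using \<open>i < j\<close> by (simp add: incomparable_Cons_Cons)
  qed
  moreover have "\<forall>x\<in>set s. length x = Suc m" "s \<noteq> []"
    using assms unfolding staircase_def by (auto simp: in_set_conv_nth)
  ultimately show ?thesis
    unfolding antichain_seqs_omega_prod antichains_def sorted_wrt_iff_nth_less by blast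
qed

lemma staircase_snoc:
  assumes s: "s \<in> staircase (Suc m)" and \<beta>: "\<beta> \<prec> tl (last s)" "length \<beta> = m"
  shows "s @ [length s # \<beta>] \<in> staircase (Suc m)"
proof -
  have "s \<noteq> []" and shape: "\<forall>k<length s. length (s ! k) = Suc m \<and> hd (s ! k) = k"
    and sorted: "sorted_wrt (\<lambda>x y. tl y \<prec> tl x) s"
    using s unfolding staircase_def by blast+
  have "\<beta> \<prec> tl x" if "x \<in> set s" for x
  proof -
    obtain k where k: "k < length s" "x = s ! k" using \<open>x \<in> set s\<close> by (auto simp: in_set_conv_nth)
    have last: "last s = s ! (length s - 1)" using \<open>s \<noteq> []\<close> by (simp add: last_conv_nth)
    show ?thesis
    proof (cases "k = length s - 1")
      case False
      then have "tl (last s) \<prec> tl x" using sorted k last unfolding sorted_wrt_iff_nth_less by auto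
      then show ?thesis using \<beta>(1) lexord_trans[OF _ _ trans_less_nat_rel] by blast
    qed (use \<beta> k last in simp)
  qed
  then show ?thesis
    using \<open>s \<noteq> []\<close> shape sorted \<beta>(2) unfolding staircase_def
    by (auto simp: nth_append sorted_wrt_append less_Suc_eq)
qed

lemma staircase_extend:
  assumes "s \<in> staircase (Suc m)" "\<beta> \<in> underS (omega_pow m) (tl (last s))"
  shows "\<exists>t\<in>children (staircase (Suc m)) s. (\<beta>, tl (last t)) \<in> omega_pow m"
proof -
  have "s @ [length s # \<beta>] \<in> staircase (Suc m)"
    using assms by (intro staircase_snoc) (auto simp: underS_omega_pow_iff)
  moreover have "length \<beta> = m" using assms(2) by (simp add: underS_omega_pow_iff)
  then have "(\<beta>, \<beta>) \<in> omega_pow m" by (simp add: omega_pow_def)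
  ultimately show ?thesis unfolding children_def by auto
qed

lemma length_tl_last_staircase: "s \<in> staircase (Suc m) \<Longrightarrow> length (tl (last s)) = m"
  unfolding staircase_def by (auto simp: last_conv_nth)

theorem is_width_omega_prod:
  "is_width (omega_prod_carrier (Suc m)) omega_prod_le (omega_pow m)"
proof -
  let ?N = "antichain_seqs (omega_prod_carrier (Suc m)) omega_prod_le"
  have "\<exists>\<rho>. is_rank (omega_pow m) ?N \<rho>"
  proof (rule rank_exists[OF Well_order_omega_pow])
    show "tl (antichain_bound m s) \<in> Field (omega_pow m)" for s
      by (simp add: Field_omega_pow length_antichain_bound)
    show "tl (antichain_bound m t) \<in> underS (omega_pow m) (tl (antichain_bound m s))"
      if "s \<in> ?N" "t \<in> children ?N s" for s t
      using antichain_bound_decreasing that by blast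
  qed
  then obtain \<rho> where \<rho>: "is_rank (omega_pow m) ?N \<rho>" ..
  have "\<exists>s\<in>?N. (\<beta>, \<rho> s) \<in> omega_pow m" if "\<beta> \<in> Field (omega_pow m)" for \<beta>
  proof -
    have "[0 # \<beta>] \<in> staircase (Suc m)" using that by (simp add: staircase_def Field_omega_pow)
    moreover have "staircase (Suc m) \<subseteq> ?N" using staircase_antichains by blast
    ultimately show ?thesis
      using rank_lower_bound[OF Well_order_omega_pow \<rho>, of "staircase (Suc m)" "\<lambda>s. tl (last s)"]
        staircase_extend length_tl_last_staircase
      by (fastforce simp: Field_omega_pow)
  qed
  then show ?thesis
    unfolding is_width_iff_rank using Well_order_omega_pow \<rho> by (auto intro: FieldI1)
qed

theorem mainTheorem6:
  fixes n :: nat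
  assumes "n \<ge> 1"
  shows "is_width (omega_prod_carrier n) omega_prod_le (omega_pow (n - 1))"
proof -
  obtain m where "n = Suc m" using assms by (cases n) auto
  then show ?thesis using is_width_omega_prod by simp
qed

end
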